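(* Let $(f^I)$ be the left-invariant coframe on $\mathbf{Sp}(2,\mathbb{R})$ described in the context, let $g_K=2(f^4)^2-2f^3\odot f^5+f^2\odot f^6-4f^1\odot f^7$ and consider $$\phi=a(4f^{147}+f^{246}+2f^{345})+b(2f^{156}+f^{236}-4f^{137})+qf^{136}+h(f^{256}-4f^{157}-2f^{237})+pf^{257}$$ with real constants $a,b,q,h,p$. The general solution of the system $$(f_\mu\lrcorner\phi)\wedge(f_\nu\lrcorner\phi)\wedge\phi=3\,g_K(f_\mu,f_\nu)\,f^1\wedge f^2\wedge\cdots\wedge f^7,\qquad \mu,\nu=1,\dots,7,$$ is given by $a=\tfrac12$, $b=h=0$, $p=\frac1q$ (with $q\neq0$ free).
   Context: Realize $\mathfrak{sp}(2,\mathbb{R})$ as the real $4\times 4$ matrices $$E=\begin{pmatrix} a_5&a_7&a_9&2a_{10}\\ -a_4&a_6&a_8&a_9\\ a_2&a_3&-a_6&-a_7\\ -2a_1&a_2&a_4&-a_5\end{pmatrix}$$ with basis $E_I=\partial E/\partial a_I$. Put $f_1=E_1,\ f_2=E_3,\ f_3=E_4,\ f_4=E_6-E_5,\ f_5=E_7,\ f_6=E_8,\ f_7=E_{10},\ f_8=E_2,\ f_9=E_5+E_6,\ f_{10}=E_9$, regarded as left-invariant vector fields on $\mathbf{Sp}(2,\mathbb{R})$, with dual left-invariant 1-forms $(f^I)$, $f_I\lrcorner f^J=\delta^J_I$. Notation: $f^I\odot f^J=\tfrac12(f^I\otimes f^J+f^J\otimes f^I)$, $(f^I)^2=f^I\odot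 f^I$, $f^{\mu\nu\rho}=f^\mu\wedge f^\nu\wedge f^\rho$. $g_K$ is the restriction of the Killing form of $\mathbf{Sp}(2,\mathbb{R})$ to $f^8=f^9=f^{10}=0$. *)

theory Defs
  imports Complex_Main
begin

text \<open>Exterior forms on the 7-dimensional Lie algebra with coframe f^1..f^7.
A form is represented by its coefficient function: \<omega> K is the coefficient of
f^{i_1} \<and> ... \<and> f^{i_k}, where K = {i_1 < ... < i_k}.\<close>

type_synonym form = "nat set \<Rightarrow> real"

definition shuffle_sign :: "nat set \<Rightarrow> nat set \<Rightarrow> real" where
  "shuffle_sign I J = (-1) ^ card {(i, j). i \<in> I \<and> j \<in> J \<and> j < i}"

text \<open>Wedge product: f^I \<and> f^J = shuffle_sign I J * f^(I \<union> J) for disjoint I, J.\<close>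
definition wedge :: "form \<Rightarrow> form \<Rightarrow> form" where
  "wedge \<alpha> \<beta> = (\<lambda>K. \<Sum>I\<in>Pow K. shuffle_sign I (K - I) * \<alpha> I * \<beta> (K - I))"

definition interior :: "nat \<Rightarrow> form \<Rightarrow> form" where
  "interior \<mu> \<alpha> = (\<lambda>J. if \<mu> \<in> J then 0
      else (-1) ^ card {j \<in> J. j < \<mu>} * \<alpha> (insert \<mu> J))"

definition basis_form :: "nat set \<Rightarrow> form" where
  "basis_form S = (\<lambda>K. if K = S then 1 else 0)"

definition form_add :: "form \<Rightarrow> form \<Rightarrow> form" where
  "form_add \<alpha> \<beta> = (\<lambda>K. \<alpha> K + \<beta> K)"

definition form_scale :: "real \<Rightarrow> form \<Rightarrow> form" where
  "form_scale c \<alpha> = (\<lambda>K. c * \<alpha> K)"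

definition phi :: "real \<Rightarrow> real \<Rightarrow> real \<Rightarrow> real \<Rightarrow> real \<Rightarrow> form" where
  "phi a b q h p = (\<lambda>K.
       a * (4 * basis_form {1,4,7} K + basis_form {2,4,6} K + 2 * basis_form {3,4,5} K)
     + b * (2 * basis_form {1,5,6} K + basis_form {2,3,6} K - 4 * basis_form {1,3,7} K)
     + q * basis_form {1,3,6} K
     + h * (basis_form {2,5,6} K - 4 * basis_form {1,5,7} K - 2 * basis_form {2,3,7} K)
     + p * basis_form {2,5,7} K)"

definition sym_prod :: "nat \<Rightarrow> nat \<Rightarrow> nat \<Rightarrow> nat \<Rightarrow> real" where
  "sym_prod i j \<mu> \<nu> = (1/2) * ((if i = \<mu> \<and> j = \<nu> then 1 else 0) + (if j = \<mu> \<and> i = \<nu> then 1 else 0))"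

definition gK :: "nat \<Rightarrow> nat \<Rightarrow> real" where
  "gK \<mu> \<nu> = 2 * sym_prod 4 4 \<mu> \<nu> - 2 * sym_prod 3 5 \<mu> \<nu> + sym_prod 2 6 \<mu> \<nu>
             - 4 * sym_prod 1 7 \<mu> \<nu>"

definition vol7 :: form where
  "vol7 = basis_form {1..7}"

end

theory Submission
  imports Defs
begin

text \<open>Each triple product \<open>(f\<^sub>\<mu> \<lrcorner> \<phi>) \<and> (f\<^sub>\<nu> \<lrcorner> \<phi>) \<and> \<phi>\<close> is a multiple of the volume
form, and its coefficient, a symmetric bilinear form in \<open>(\<mu>, \<nu>)\<close>, has only four independent entries:
\<open>48 a\<^sup>3\<close> at \<open>(4, 4)\<close>; \<open>6 a (p q + 4 b h)\<close> times the \<open>g\<^sub>K\<close>-pattern at \<open>(1, 7), (2, 6), (3, 5)\<close>;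
and multiples of \<open>a (2 b\<^sup>2 - h q)\<close> and \<open>a (b p + 2 h\<^sup>2)\<close> at entries where \<open>g\<^sub>K\<close> vanishes.
Matching with \<open>3 g\<^sub>K\<close> forces \<open>a = 1/2\<close>, \<open>p q + 4 b h = 1\<close>, \<open>2 b\<^sup>2 = h q\<close> and \<open>b p = -2 h\<^sup>2\<close>.
Then \<open>b q = b q (p q + 4 b h) = q\<^sup>2 (b p) + 2 (2 b\<^sup>2) (h q) = 0\<close>, so \<open>b = 0\<close>, hence \<open>h = 0\<close>
and \<open>p q = 1\<close>.\<close>

text \<open>Forms are computed as lists of monomials \<open>c f\<^sup>s\<close> with explicit index lists \<open>s\<close>, so that
the simplifier can evaluate interior and wedge products, including their signs.\<close>

definition form_of_terms :: "(real \<times> nat list) list \<Rightarrow> form" where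
  "form_of_terms xs = (\<lambda>K. \<Sum>(c, s)\<leftarrow>xs. c * basis_form (set s) K)"

definition distinct_terms :: "(real \<times> nat list) list \<Rightarrow> bool" where
  "distinct_terms xs \<longleftrightarrow> (\<forall>(c, s)\<in>set xs. distinct s)"

definition inversion_sign :: "nat list \<Rightarrow> nat list \<Rightarrow> real" where
  "inversion_sign s t = (-1) ^ length [(i, j) \<leftarrow> List.product s t. j < i]"

definition interior_terms :: "nat \<Rightarrow> (real \<times> nat list) list \<Rightarrow> (real \<times> nat list) list" where
  "interior_terms m xs =
     [((-1) ^ length [j \<leftarrow> s. j < m] * c, remove1 m s). (c, s) \<leftarrow> xs, m \<in> set s]"

definition wedge_terms ::
    "(real \<times> nat list) list \<Rightarrow> (real \<times> nat list) list \<Rightarrow> (real \<times> nat list) list" where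
  "wedge_terms xs ys =
     [(c * d * inversion_sign s t, sort (s @ t)). (c, s) \<leftarrow> xs, (d, t) \<leftarrow> ys, set s \<inter> set t = {}]"

lemma form_of_terms_Nil [simp]: "form_of_terms [] = (\<lambda>K. 0)"
  by (simp add: form_of_terms_def)

lemma form_of_terms_Cons [simp]:
  "form_of_terms ((c, s) # xs) = (\<lambda>K. c * basis_form (set s) K + form_of_terms xs K)"
  by (simp add: form_of_terms_def)

lemma form_of_terms_append [simp]:
  "form_of_terms (xs @ ys) = (\<lambda>K. form_of_terms xs K + form_of_terms ys K)"
  by (simp add: form_of_terms_def)

lemma distinct_terms_interior_terms:
  "distinct_terms xs \<Longrightarrow> distinct_terms (interior_terms m xs)"
  by (auto simp: distinct_terms_def interior_terms_def)

lemma distinct_terms_wedge_terms: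
  "distinct_terms xs \<Longrightarrow> distinct_terms ys \<Longrightarrow> distinct_terms (wedge_terms xs ys)"
  by (auto simp: distinct_terms_def wedge_terms_def)

lemma shuffle_sign_set:
  assumes "distinct s" "distinct t"
  shows "shuffle_sign (set s) (set t) = inversion_sign s t"
proof -
  let ?inv = "[(i, j) \<leftarrow> List.product s t. j < i]"
  have "{(i, j). i \<in> set s \<and> j \<in> set t \<and> j < i} = set ?inv"
    by auto
  moreover have "distinct ?inv"
    using assms by (simp add: distinct_product)
  ultimately show ?thesis
    unfolding shuffle_sign_def inversion_sign_def by (metis distinct_card)
qed

lemma interior_basis_form:
  assumes "distinct s"
  shows "interior m (basis_form (set s)) =
    (if m \<in> set s then form_scale ((-1) ^ length [j \<leftarrow> s. j < m]) (basis_form (set (remove1 m s)))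
     else (\<lambda>K. 0))" (is "?lhs = ?rhs")
proof
  fix J
  show "?lhs J = ?rhs J"
  proof (cases "m \<notin> J \<and> insert m J = set s")
    case True
    then have "{j \<in> J. j < m} = set [j \<leftarrow> s. j < m]"
      by auto
    then have "card {j \<in> J. j < m} = length [j \<leftarrow> s. j < m]"
      using assms by (metis distinct_card distinct_filter)
    with True assms show ?thesis
      by (auto simp: interior_def basis_form_def form_scale_def)
  next
    case False
    with assms show ?thesis
      by (auto simp: interior_def basis_form_def form_scale_def)
  qed
qed

lemma interior_linear:
  "interior m (\<lambda>K. c * \<alpha> K + \<beta> K) = (\<lambda>K. c * interior m \<alpha> K + interior m \<beta> K)"
  by (simp add: interior_def fun_eq_iff algebra_simps)

lemma interior_form_of_terms:
  "distinct_terms xs \<Longrightarrow> interior m (form_of_terms xs) = form_of_terms (interior_terms m xs)"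
proof (induction xs)
  case Nil
  then show ?case
    by (simp add: interior_terms_def interior_def fun_eq_iff)
next
  case (Cons x xs)
  then show ?case
    by (cases x)
      (auto simp: distinct_terms_def interior_terms_def interior_linear interior_basis_form
        form_scale_def)
qed

lemma wedge_basis_form:
  assumes "finite S" "finite T"
  shows "wedge (basis_form S) (basis_form T) K =
         (if S \<inter> T = {} \<and> K = S \<union> T then shuffle_sign S T else 0)"
proof (cases "finite K")
  case False
  with assms show ?thesis
    by (auto simp: wedge_def)
next
  case True
  have "wedge (basis_form S) (basis_form T) K =
        (\<Sum>I\<in>Pow K. if I = S then shuffle_sign S (K - S) * (if K - S = T then 1 else 0) else 0)"
    unfolding wedge_def basis_form_def by (rule sum.cong) auto
  also have "\<dots> = (if S \<subseteq> K then shuffle_sign S (K - S) * (if K - S = T then 1 else 0) else 0)"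
    using True by (simp add: sum.delta)
  also have "\<dots> = (if S \<inter> T = {} \<and> K = S \<union> T then shuffle_sign S T else 0)"
    by auto
  finally show ?thesis .
qed

lemma wedge_linear_left:
  "wedge (\<lambda>K. c * \<alpha> K + \<beta> K) \<gamma> K = c * wedge \<alpha> \<gamma> K + wedge \<beta> \<gamma> K"
  by (simp add: wedge_def sum.distrib sum_distrib_left algebra_simps)

lemma wedge_linear_right:
  "wedge \<gamma> (\<lambda>K. c * \<alpha> K + \<beta> K) K = c * wedge \<gamma> \<alpha> K + wedge \<gamma> \<beta> K"
  by (simp add: wedge_def sum.distrib sum_distrib_left algebra_simps)

lemma wedge_zero_left [simp]: "wedge (\<lambda>K. 0) \<gamma> K = 0"
  by (simp add: wedge_def)

lemma wedge_zero_right [simp]: "wedge \<gamma> (\<lambda>K. 0) K = 0"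
  by (simp add: wedge_def)

lemma wedge_basis_form_form_of_terms:
  assumes "distinct s" "distinct_terms ys"
  shows "c * wedge (basis_form (set s)) (form_of_terms ys) K =
    form_of_terms (wedge_terms [(c, s)] ys) K"
  using assms(2)
proof (induction ys)
  case Nil
  then show ?case
    by (simp add: wedge_terms_def)
next
  case (Cons y ys)
  obtain d t where y: "y = (d, t)"
    by force
  with Cons.prems have "distinct t" "distinct_terms ys"
    by (auto simp: distinct_terms_def)
  have "c * wedge (basis_form (set s)) (form_of_terms (y # ys)) K =
      c * d * wedge (basis_form (set s)) (basis_form (set t)) K
      + c * wedge (basis_form (set s)) (form_of_terms ys) K"
    by (simp only: y form_of_terms_Cons wedge_linear_right) (simp add: algebra_simps)
  also have "\<dots> = form_of_terms (wedge_terms [(c, s)] (y # ys)) K"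
    using Cons.IH \<open>distinct_terms ys\<close>
    unfolding wedge_basis_form[OF finite_set finite_set] shuffle_sign_set[OF assms(1) \<open>distinct t\<close>]
    by (simp add: y wedge_terms_def basis_form_def)
  finally show ?case .
qed

lemma wedge_form_of_terms:
  assumes "distinct_terms xs" "distinct_terms ys"
  shows "wedge (form_of_terms xs) (form_of_terms ys) = form_of_terms (wedge_terms xs ys)"
proof
  fix K
  show "wedge (form_of_terms xs) (form_of_terms ys) K = form_of_terms (wedge_terms xs ys) K"
    using assms(1)
  proof (induction xs)
    case Nil
    then show ?case
      by (simp add: wedge_terms_def)
  next
    case (Cons x xs)
    obtain c s where x: "x = (c, s)"
      by force
    with Cons.prems have "distinct s" "distinct_terms xs"
      by (auto simp: distinct_terms_def)
    with Cons.IH wedge_basis_form_form_of_terms[OF _ assms(2)] show ?case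
      by (simp add: x wedge_linear_left wedge_terms_def)
  qed
qed

lemma form_of_terms_single_support:
  "\<forall>(c, s)\<in>set xs. set s = S \<Longrightarrow> form_of_terms xs = form_scale (\<Sum>(c, s)\<leftarrow>xs. c) (basis_form S)"
  by (induction xs) (auto simp: form_scale_def fun_eq_iff algebra_simps)

lemma form_scale_basis_form_eq_iff:
  "form_scale c (basis_form S) = form_scale d (basis_form S) \<longleftrightarrow> c = d"
  by (auto simp: form_scale_def basis_form_def fun_eq_iff dest: spec[of _ S])

definition phi_terms :: "real \<Rightarrow> real \<Rightarrow> real \<Rightarrow> real \<Rightarrow> real \<Rightarrow> (real \<times> nat list) list" where
  "phi_terms a b q h p =
    [(4 * a, [1,4,7]), (a, [2,4,6]), (2 * a, [3,4,5]),
     (2 * b, [1,5,6]), (b, [2,3,6]), (-4 * b, [1,3,7]),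
     (q, [1,3,6]),
     (h, [2,5,6]), (-4 * h, [1,5,7]), (-2 * h, [2,3,7]),
     (p, [2,5,7])]"

lemma phi_eq_form_of_terms: "phi a b q h p = form_of_terms (phi_terms a b q h p)"
  by (simp add: phi_def phi_terms_def fun_eq_iff algebra_simps insert_commute)

lemma distinct_terms_phi_terms: "distinct_terms (phi_terms a b q h p)"
  by (simp add: distinct_terms_def phi_terms_def)

definition phi_bilinear :: "real \<Rightarrow> real \<Rightarrow> real \<Rightarrow> real \<Rightarrow> real \<Rightarrow> nat \<Rightarrow> nat \<Rightarrow> real" where
  "phi_bilinear a b q h p \<mu> \<nu> =
     48 * a ^ 3 * sym_prod 4 4 \<mu> \<nu>
     + 6 * a * (p * q + 4 * b * h) * (sym_prod 2 6 \<mu> \<nu> - 2 * sym_prod 3 5 \<mu> \<nu> - 4 * sym_prod 1 7 \<mu> \<nu>)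
     + 24 * a * (2 * b\<^sup>2 - h * q) * (2 * sym_prod 1 6 \<mu> \<nu> - sym_prod 3 3 \<mu> \<nu>)
     - 24 * a * (b * p + 2 * h\<^sup>2) * (2 * sym_prod 2 7 \<mu> \<nu> + sym_prod 5 5 \<mu> \<nu>)"

lemma wedge_interior_phi:
  assumes "\<mu> \<in> {1..7}" "\<nu> \<in> {1..7}"
  shows "wedge (wedge (interior \<mu> (phi a b q h p)) (interior \<nu> (phi a b q h p))) (phi a b q h p)
    = form_scale (phi_bilinear a b q h p \<mu> \<nu>) vol7"
proof -
  let ?T = "wedge_terms (wedge_terms (interior_terms \<mu> (phi_terms a b q h p))
    (interior_terms \<nu> (phi_terms a b q h p))) (phi_terms a b q h p)"
  have seven: "{1..7::nat} = {1, 2, 3, 4, 5, 6, 7}"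
    by auto
  have "(\<forall>(c, s)\<in>set ?T. set s = {1..7}) \<and> (\<Sum>(c, s)\<leftarrow>?T. c) = phi_bilinear a b q h p \<mu> \<nu>"
    using assms unfolding seven
    by (elim insertE emptyE; simp add: phi_terms_def interior_terms_def wedge_terms_def
        inversion_sign_def phi_bilinear_def sym_prod_def power2_eq_square power3_eq_cube algebra_simps)
  then have "form_of_terms ?T = form_scale (phi_bilinear a b q h p \<mu> \<nu>) vol7"
    using form_of_terms_single_support[of ?T "{1..7}"] by (simp add: vol7_def)
  moreover have "wedge (wedge (interior \<mu> (phi a b q h p)) (interior \<nu> (phi a b q h p))) (phi a b q h p)
    = form_of_terms ?T"
    by (simp add: phi_eq_form_of_terms interior_form_of_terms wedge_form_of_terms
        distinct_terms_phi_terms distinct_terms_interior_terms distinct_terms_wedge_terms)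
  ultimately show ?thesis
    by simp
qed

lemma phi_bilinear_eq_gK_iff:
  "(\<forall>\<mu>\<in>{1..7}. \<forall>\<nu>\<in>{1..7}. phi_bilinear a b q h p \<mu> \<nu> = 3 * gK \<mu> \<nu>) \<longleftrightarrow>
   8 * a ^ 3 = 1 \<and> 2 * a * (p * q + 4 * b * h) = 1 \<and>
   a * (2 * b\<^sup>2 - h * q) = 0 \<and> a * (b * p + 2 * h\<^sup>2) = 0"
  (is "?coefficients \<longleftrightarrow> ?system")
proof
  assume ?coefficients
  then have "phi_bilinear a b q h p 4 4 = 3 * gK 4 4" "phi_bilinear a b q h p 1 7 = 3 * gK 1 7"
    "phi_bilinear a b q h p 1 6 = 3 * gK 1 6" "phi_bilinear a b q h p 2 7 = 3 * gK 2 7"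
    by auto
  then show ?system
    by (simp add: phi_bilinear_def gK_def sym_prod_def)
next
  assume ?system
  then have coefficients: "48 * a ^ 3 = 6" "6 * a * (p * q + 4 * b * h) = 3"
    "24 * a * (2 * b\<^sup>2 - h * q) = 0" "24 * a * (b * p + 2 * h\<^sup>2) = 0"
    by auto
  have "phi_bilinear a b q h p \<mu> \<nu> = 3 * gK \<mu> \<nu>" for \<mu> \<nu>
    unfolding phi_bilinear_def coefficients gK_def by (simp add: algebra_simps)
  then show ?coefficients
    by blast
qed

lemma phi_system_solution:
  fixes a b q h p :: real
  shows "8 * a ^ 3 = 1 \<and> 2 * a * (p * q + 4 * b * h) = 1 \<and>
      a * (2 * b\<^sup>2 - h * q) = 0 \<and> a * (b * p + 2 * h\<^sup>2) = 0
    \<longleftrightarrow> a = 1/2 \<and> b = 0 \<and> h = 0 \<and> q \<noteq> 0 \<and> p = 1 / q"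
proof
  assume "8 * a ^ 3 = 1 \<and> 2 * a * (p * q + 4 * b * h) = 1 \<and>
      a * (2 * b\<^sup>2 - h * q) = 0 \<and> a * (b * p + 2 * h\<^sup>2) = 0"
  then have cube: "(2 * a) ^ 3 = 1 ^ 3" and trace: "2 * a * (p * q + 4 * b * h) = 1"
    and bq: "a * (2 * b\<^sup>2 - h * q) = 0" and bp: "a * (b * p + 2 * h\<^sup>2) = 0"
    by (simp_all add: power_mult_distrib)
  then have "0 < (2 * a) ^ 3"
    by simp
  then have "0 < 2 * a"
    unfolding zero_less_power_eq by simp
  with cube have a: "a = 1/2"
    using power_eq_iff_eq_base[of 3 "2 * a" 1] by simp
  then have e1: "2 * b\<^sup>2 = h * q" and e2: "p * q + 4 * b * h = 1" and e3: "b * p = -2 * h\<^sup>2"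
    using trace bq bp unfolding a by auto
  have "b * q = b * q * (p * q + 4 * b * h)"
    using e2 by simp
  also have "\<dots> = q\<^sup>2 * (b * p) + 2 * (2 * b\<^sup>2) * (h * q)"
    by (simp add: algebra_simps power2_eq_square)
  also have "\<dots> = 0"
    using e1 e3 by (simp add: algebra_simps power2_eq_square)
  finally have "b * q = 0" .
  with e1 have b: "b = 0"
    by auto
  with e3 have h: "h = 0"
    by simp
  with b e2 have "p * q = 1"
    by simp
  with a b h show "a = 1/2 \<and> b = 0 \<and> h = 0 \<and> q \<noteq> 0 \<and> p = 1 / q"
    by (auto simp: eq_divide_eq)
next
  assume "a = 1/2 \<and> b = 0 \<and> h = 0 \<and> q \<noteq> 0 \<and> p = 1 / q"
  then show "8 * a ^ 3 = 1 \<and> 2 * a * (p * q + 4 * b * h) = 1 \<and>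
      a * (2 * b\<^sup>2 - h * q) = 0 \<and> a * (b * p + 2 * h\<^sup>2) = 0"
    by (elim conjE; hypsubst; simp add: power_divide)
qed

theorem proposition4p3:
  fixes a b q h p :: real
  shows "(\<forall>\<mu>\<in>{1..7::nat}. \<forall>\<nu>\<in>{1..7::nat}.
            wedge (wedge (interior \<mu> (phi a b q h p)) (interior \<nu> (phi a b q h p))) (phi a b q h p)
            = form_scale (3 * gK \<mu> \<nu>) vol7)
         \<longleftrightarrow> (a = 1/2 \<and> b = 0 \<and> h = 0 \<and> q \<noteq> 0 \<and> p = 1 / q)"
proof -
  have triple_product_iff:
    "wedge (wedge (interior \<mu> (phi a b q h p)) (interior \<nu> (phi a b q h p))) (phi a b q h p)
      = form_scale (3 * gK \<mu> \<nu>) vol7 \<longleftrightarrow> phi_bilinear a b q h p \<mu> \<nu> = 3 * gK \<mu> \<nu>"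
    if "\<mu> \<in> {1..7}" "\<nu> \<in> {1..7}" for \<mu> \<nu>
    using that by (simp add: wedge_interior_phi vol7_def form_scale_basis_form_eq_iff)
  have "(\<forall>\<mu>\<in>{1..7::nat}. \<forall>\<nu>\<in>{1..7::nat}. phi_bilinear a b q h p \<mu> \<nu> = 3 * gK \<mu> \<nu>)
      \<longleftrightarrow> a = 1/2 \<and> b = 0 \<and> h = 0 \<and> q \<noteq> 0 \<and> p = 1 / q"
    by (simp only: phi_bilinear_eq_gK_iff phi_system_solution)
  with triple_product_iff show ?thesis
    by simp
qed

end
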